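(* For all positive integers $m,n$, the cyclic simplicial rook graph $\mathcal{CSR}(m,n)$ is a Cayley graph.
   Context: For positive integers $m,n$, the cyclic simplicial rook graph $\mathcal{CSR}(m,n)$ is the graph whose vertices are the vectors $(a_1,\dots,a_m)\in\mathbb{Z}_n^m$ with $a_1+\cdots+a_m\equiv 0 \pmod n$, two vertices being adjacent if and only if their vectors differ in exactly two coordinates. For a group $\Gamma$ and a subset $S\subseteq\Gamma$ closed under inverses and not containing the identity, the Cayley graph $\mathrm{Cay}(\Gamma,S)$ has vertex set $\Gamma$, with $x,y$ adjacent iff $x^{-1}y\in S$. A graph is a Cayley graph if it is isomorphic to some $\mathrm{Cay}(\Gamma,S)$. *)

theory Defs
  imports "HOL-Algebra.Group"
begin

text \<open>Vertices of CSR(m,n): vectors (a_1,...,a_m) in Z_n^m, represented as lists of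
  naturals of length m with entries in {0..<n}, whose sum is 0 mod n.\<close>
definition CSR_verts :: "nat \<Rightarrow> nat \<Rightarrow> nat list set" where
  "CSR_verts m n = {a. length a = m \<and> (\<forall>i<m. a ! i < n) \<and> sum_list a mod n = 0}"

definition CSR_adj :: "nat list \<Rightarrow> nat list \<Rightarrow> bool" where
  "CSR_adj a b \<longleftrightarrow> card {i. i < length a \<and> a ! i \<noteq> b ! i} = 2"

definition cayley_conn :: "('a, 'b) monoid_scheme \<Rightarrow> 'a set \<Rightarrow> bool" where
  "cayley_conn G S \<longleftrightarrow> group G \<and> S \<subseteq> carrier G \<and> \<one>\<^bsub>G\<^esub> \<notin> S
     \<and> (\<forall>s\<in>S. inv\<^bsub>G\<^esub> s \<in> S)"

definition cayley_adj :: "('a, 'b) monoid_scheme \<Rightarrow> 'a set \<Rightarrow> 'a \<Rightarrow> 'a \<Rightarrow> bool" where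
  "cayley_adj G S x y \<longleftrightarrow> inv\<^bsub>G\<^esub> x \<otimes>\<^bsub>G\<^esub> y \<in> S"

definition graph_iso :: "'v set \<Rightarrow> ('v \<Rightarrow> 'v \<Rightarrow> bool) \<Rightarrow> 'w set \<Rightarrow> ('w \<Rightarrow> 'w \<Rightarrow> bool) \<Rightarrow> bool" where
  "graph_iso V E W F \<longleftrightarrow> (\<exists>f. bij_betw f V W \<and> (\<forall>x\<in>V. \<forall>y\<in>V. E x y \<longleftrightarrow> F (f x) (f y)))"

text \<open>A graph is a Cayley graph if it is isomorphic to some Cay(G,S).  The group's carrier
  is taken in the vertex type; since any group can be transported along a bijection,
  this loses no generality.\<close>
definition is_cayley_graph :: "'v set \<Rightarrow> ('v \<Rightarrow> 'v \<Rightarrow> bool) \<Rightarrow> bool" where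
  "is_cayley_graph V E \<longleftrightarrow>
     (\<exists>(G :: 'v monoid) S. cayley_conn G S \<and> graph_iso V E (carrier G) (cayley_adj G S))"

end

theory Submission
  imports Defs "HOL-Algebra.Coset"
begin

(* The vertex set of CSR(m,n) is a subgroup of Z_n^m, namely the kernel of the coordinate sum.
   In any power group H^m the set of coordinates in which two vectors differ is invariant under
   left translation, so x and y differ in exactly two coordinates iff x^-1 y has exactly two
   nontrivial coordinates: the graph is Cay(K, S) with S the vectors of K of weight two. *)

definition list_group :: "('a, 'b) monoid_scheme \<Rightarrow> nat \<Rightarrow> 'a list monoid" where
  "list_group H m =
     \<lparr>carrier = {xs. length xs = m \<and> (\<forall>i<m. xs ! i \<in> carrier H)},
      mult = map2 (\<otimes>\<^bsub>H\<^esub>),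
      one = replicate m \<one>\<^bsub>H\<^esub>\<rparr>"

lemma group_list_group:
  assumes "group H"
  shows "group (list_group H m)"
proof -
  interpret H: group H by fact
  show ?thesis
  proof (rule groupI)
    fix xs assume "xs \<in> carrier (list_group H m)"
    then have xs: "length xs = m" "\<forall>i<m. xs ! i \<in> carrier H"
      by (simp_all add: list_group_def)
    then show "\<one>\<^bsub>list_group H m\<^esub> \<otimes>\<^bsub>list_group H m\<^esub> xs = xs"
      by (simp add: list_group_def) (rule nth_equalityI; simp)
    have "map (\<lambda>x. inv\<^bsub>H\<^esub> x) xs \<in> carrier (list_group H m)"
         "map (\<lambda>x. inv\<^bsub>H\<^esub> x) xs \<otimes>\<^bsub>list_group H m\<^esub> xs = \<one>\<^bsub>list_group H m\<^esub>"
      using xs by (simp_all add: list_group_def) (rule nth_equalityI; simp)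
    then show "\<exists>ys\<in>carrier (list_group H m). ys \<otimes>\<^bsub>list_group H m\<^esub> xs = \<one>\<^bsub>list_group H m\<^esub>"
      by blast
  qed (auto simp: list_group_def H.m_assoc intro!: nth_equalityI)
qed

definition nat_mod_group :: "nat \<Rightarrow> nat monoid" where
  "nat_mod_group n = \<lparr>carrier = {0..<n}, mult = \<lambda>x y. (x + y) mod n, one = 0\<rparr>"

lemma group_nat_mod_group:
  assumes "n > 0"
  shows "group (nat_mod_group n)"
proof (rule groupI)
  fix x assume "x \<in> carrier (nat_mod_group n)"
  then have "(n - x) mod n \<in> carrier (nat_mod_group n)"
    "(n - x) mod n \<otimes>\<^bsub>nat_mod_group n\<^esub> x = \<one>\<^bsub>nat_mod_group n\<^esub>"
    using assms by (auto simp: nat_mod_group_def mod_add_left_eq)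
  then show "\<exists>y\<in>carrier (nat_mod_group n). y \<otimes>\<^bsub>nat_mod_group n\<^esub> x = \<one>\<^bsub>nat_mod_group n\<^esub>"
    by blast
qed (auto simp: nat_mod_group_def assms mod_add_left_eq mod_add_right_eq add.assoc)

lemma sum_list_map2_add_mod:
  fixes xs ys :: "nat list"
  assumes "length xs = length ys"
  shows "sum_list (map2 (\<lambda>x y. (x + y) mod n) xs ys) mod n = (sum_list xs + sum_list ys) mod n"
  using assms
proof (induction xs ys rule: list_induct2)
  case (Cons x xs y ys)
  have "sum_list (map2 (\<lambda>x y. (x + y) mod n) (x # xs) (y # ys)) mod n
      = ((x + y) mod n + sum_list (map2 (\<lambda>x y. (x + y) mod n) xs ys)) mod n"
    by simp
  also have "\<dots> = ((x + y) + (sum_list xs + sum_list ys)) mod n"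
    using Cons.IH by (intro mod_add_cong) simp_all
  finally show ?case
    by (simp add: add_ac)
qed simp

lemma sum_list_mod_hom:
  assumes "n > 0"
  shows "(\<lambda>xs. sum_list xs mod n) \<in> hom (list_group (nat_mod_group n) m) (nat_mod_group n)"
proof (rule homI)
  fix xs ys
  assume "xs \<in> carrier (list_group (nat_mod_group n) m)" "ys \<in> carrier (list_group (nat_mod_group n) m)"
  then have "length xs = length ys"
    by (simp add: list_group_def)
  then show "sum_list (xs \<otimes>\<^bsub>list_group (nat_mod_group n) m\<^esub> ys) mod n =
      (sum_list xs mod n) \<otimes>\<^bsub>nat_mod_group n\<^esub> (sum_list ys mod n)"
    by (simp add: list_group_def nat_mod_group_def sum_list_map2_add_mod mod_simps)
qed (simp add: assms nat_mod_group_def)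

lemma CSR_verts_eq_kernel:
  "CSR_verts m n = kernel (list_group (nat_mod_group n) m) (nat_mod_group n) (\<lambda>xs. sum_list xs mod n)"
  by (auto simp: CSR_verts_def kernel_def list_group_def nat_mod_group_def)

lemma is_cayley_graph_if_left_invariant:
  fixes G :: "'v monoid" and E :: "'v \<Rightarrow> 'v \<Rightarrow> bool"
  assumes "group G"
    and irrefl: "\<And>x. x \<in> carrier G \<Longrightarrow> \<not> E x x"
    and sym: "\<And>x y. x \<in> carrier G \<Longrightarrow> y \<in> carrier G \<Longrightarrow> E x y \<Longrightarrow> E y x"
    and left_invariant: "\<And>g x y. g \<in> carrier G \<Longrightarrow> x \<in> carrier G \<Longrightarrow> y \<in> carrier G \<Longrightarrow>
      E (g \<otimes>\<^bsub>G\<^esub> x) (g \<otimes>\<^bsub>G\<^esub> y) \<longleftrightarrow> E x y"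
  shows "is_cayley_graph (carrier G) E"
proof -
  interpret group G by fact
  define S where "S = {s \<in> carrier G. E \<one>\<^bsub>G\<^esub> s}"
  have adj: "E x y \<longleftrightarrow> cayley_adj G S x y" if "x \<in> carrier G" "y \<in> carrier G" for x y
  proof -
    have "E x y \<longleftrightarrow> E (inv\<^bsub>G\<^esub> x \<otimes>\<^bsub>G\<^esub> x) (inv\<^bsub>G\<^esub> x \<otimes>\<^bsub>G\<^esub> y)"
      using left_invariant[of "inv\<^bsub>G\<^esub> x" x y] that by simp
    also have "\<dots> \<longleftrightarrow> inv\<^bsub>G\<^esub> x \<otimes>\<^bsub>G\<^esub> y \<in> S"
      using that by (simp add: S_def)
    finally show ?thesis
      by (simp add: cayley_adj_def)
  qed
  have "cayley_conn G S"
    unfolding cayley_conn_def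
  proof (intro conjI ballI)
    show "\<one>\<^bsub>G\<^esub> \<notin> S"
      using irrefl by (simp add: S_def)
    fix s assume "s \<in> S"
    then have s: "s \<in> carrier G" "E s \<one>\<^bsub>G\<^esub>"
      using sym by (simp_all add: S_def)
    then have "E \<one>\<^bsub>G\<^esub> (inv\<^bsub>G\<^esub> s)"
      using left_invariant[of "inv\<^bsub>G\<^esub> s" s "\<one>\<^bsub>G\<^esub>"] by simp
    then show "inv\<^bsub>G\<^esub> s \<in> S"
      using s by (simp add: S_def)
  qed (auto simp: S_def group_axioms)
  moreover have "graph_iso (carrier G) E (carrier G) (cayley_adj G S)"
    unfolding graph_iso_def using adj by (intro exI[of _ id]) simp
  ultimately show ?thesis
    unfolding is_cayley_graph_def by blast
qed

lemma not_CSR_adj_self: "\<not> CSR_adj x x"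
  by (simp add: CSR_adj_def)

lemma CSR_adj_commute:
  assumes "length x = length y"
  shows "CSR_adj x y \<longleftrightarrow> CSR_adj y x"
proof -
  have "{i. i < length x \<and> x ! i \<noteq> y ! i} = {i. i < length y \<and> y ! i \<noteq> x ! i}"
    using assms by auto
  then show ?thesis
    by (simp only: CSR_adj_def)
qed

lemma CSR_adj_mult_list_group:
  assumes "group H"
    and "g \<in> carrier (list_group H m)" "x \<in> carrier (list_group H m)" "y \<in> carrier (list_group H m)"
  shows "CSR_adj (g \<otimes>\<^bsub>list_group H m\<^esub> x) (g \<otimes>\<^bsub>list_group H m\<^esub> y) \<longleftrightarrow> CSR_adj x y"
proof -
  interpret H: group H by fact
  show ?thesis
    using assms(2-4) unfolding CSR_adj_def by (simp add: list_group_def cong: conj_cong)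
qed

lemma is_cayley_graph_CSR_adj_subgroup:
  assumes "group H" and K: "subgroup K (list_group H m)"
  shows "is_cayley_graph K CSR_adj"
proof -
  let ?K = "list_group H m\<lparr>carrier := K\<rparr>"
  have K_carrier: "K \<subseteq> carrier (list_group H m)"
    using K by (rule subgroup.subset)
  have "is_cayley_graph (carrier ?K) CSR_adj"
  proof (rule is_cayley_graph_if_left_invariant)
    show "group ?K"
      using K group_list_group[OF assms(1)] by (rule subgroup.subgroup_is_group)
    show "\<not> CSR_adj x x" for x
      by (rule not_CSR_adj_self)
    show "CSR_adj y x" if "x \<in> carrier ?K" "y \<in> carrier ?K" "CSR_adj x y" for x y
    proof -
      have "length x = length y"
        using that(1,2) K_carrier by (auto simp: list_group_def)
      then show ?thesis
        using that(3) CSR_adj_commute by blast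
    qed
    show "CSR_adj (g \<otimes>\<^bsub>?K\<^esub> x) (g \<otimes>\<^bsub>?K\<^esub> y) \<longleftrightarrow> CSR_adj x y"
      if "g \<in> carrier ?K" "x \<in> carrier ?K" "y \<in> carrier ?K" for g x y
      using that K_carrier CSR_adj_mult_list_group[OF assms(1)] by (simp add: subset_iff)
  qed
  then show ?thesis
    by simp
qed

theorem lemma2:
  fixes m n :: nat
  assumes "m > 0" and "n > 0"
  shows "is_cayley_graph (CSR_verts m n) CSR_adj"
proof -
  have "group_hom (list_group (nat_mod_group n) m) (nat_mod_group n) (\<lambda>xs. sum_list xs mod n)"
    using group_list_group[OF group_nat_mod_group] group_nat_mod_group sum_list_mod_hom \<open>n > 0\<close>
    by (simp add: group_hom_def group_hom_axioms_def)
  then have "subgroup (CSR_verts m n) (list_group (nat_mod_group n) m)"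
    unfolding CSR_verts_eq_kernel by (rule group_hom.subgroup_kernel)
  then show ?thesis
    using is_cayley_graph_CSR_adj_subgroup group_nat_mod_group \<open>n > 0\<close> by blast
qed

end
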